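(* Consider a finite reward-free MDP with occupancy polytope $\Phi$ and a dataset $\mathcal D=\{(d_e^k,\epsilon^k)\}_{k=1}^K$ with $d_e^k\in\Phi$, $\epsilon^k\ge0$. Let $\mathcal P\subseteq[K]\times[K]$ and margins $\epsilon_{ij}\ge0$ for $(i,j)\in\mathcal P$, and let \[\mathcal R_{\mathcal P}:=\{r\in\mathcal R(\mathcal D): r^\top(d_e^i-d_e^j)\ge\epsilon_{ij}\ \forall(i,j)\in\mathcal P\}.\] Let $\mathcal G$ be the directed graph with vertex set $[K]$ and edge set $\mathcal P$. For any simple directed path $p=(i_0\to i_1\to\cdots\to i_m)$ in $\mathcal G$, with $\epsilon(p):=\sum_{\ell=1}^m\epsilon_{i_{\ell-1}i_\ell}$, if $\mathcal R_{\mathcal P}\ne\emptyset$ then $\mathrm{rng}(\mathcal R_{\mathcal P})\ge\epsilon(p)$.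
   Context: The MDP has finite $S$, $A$, transitions $P$, initial distribution $\mu_0$, discount $\gamma\in(0,1)$; $(Md)(s)=\sum_a d(s,a)-\gamma\sum_{s',a'}P(s\mid s',a')d(s',a')$ and $\Phi=\{d\ge0:Md=(1-\gamma)\mu_0\}$. Rewards are $r\in\Delta(S\times A)$. $\mathrm{subopt}(r,d):=\max_{\tilde d\in\Phi}r^\top\tilde d-r^\top d$; $\mathcal R(\mathcal D):=\{r\in\Delta(S\times A):\mathrm{subopt}(r,d_e^k)\le\epsilon^k\ \forall k\}$. For a set of rewards $\mathcal R$, $\mathrm{rng}(\mathcal R):=\min_{r\in\mathcal R}\big(\max_{\tilde d\in\Phi}r^\top\tilde d-\min_{d\in\Phi}r^\top d\big)$. *)

theory Defs
  imports "HOL-Analysis.Analysis"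
begin

text \<open>MDP with finite state type 's and action type 'a. The transition kernel is
  Ptr s a s' = P(s' | s, a). Occupancy measures / rewards are functions on 's \<times> 'a.\<close>

definition stochastic_kernel :: "('s::finite \<Rightarrow> 'a::finite \<Rightarrow> 's \<Rightarrow> real) \<Rightarrow> bool" where
  "stochastic_kernel Ptr \<longleftrightarrow> (\<forall>s a s'. Ptr s a s' \<ge> 0) \<and> (\<forall>s a. (\<Sum>s'\<in>UNIV. Ptr s a s') = 1)"

definition is_distribution :: "('x::finite \<Rightarrow> real) \<Rightarrow> bool" where
  "is_distribution f \<longleftrightarrow> (\<forall>x. f x \<ge> 0) \<and> (\<Sum>x\<in>UNIV. f x) = 1"

definition flowM :: "('s::finite \<Rightarrow> 'a::finite \<Rightarrow> 's \<Rightarrow> real) \<Rightarrow> real \<Rightarrow> ('s \<times> 'a \<Rightarrow> real) \<Rightarrow> 's \<Rightarrow> real" where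
  "flowM Ptr \<gamma> d s = (\<Sum>a\<in>UNIV. d (s, a)) - \<gamma> * (\<Sum>s'\<in>UNIV. \<Sum>a'\<in>UNIV. Ptr s' a' s * d (s', a'))"

definition Phi :: "('s::finite \<Rightarrow> 'a::finite \<Rightarrow> 's \<Rightarrow> real) \<Rightarrow> real \<Rightarrow> ('s \<Rightarrow> real) \<Rightarrow> ('s \<times> 'a \<Rightarrow> real) set" where
  "Phi Ptr \<gamma> \<mu>0 = {d. (\<forall>x. d x \<ge> 0) \<and> (\<forall>s. flowM Ptr \<gamma> d s = (1 - \<gamma>) * \<mu>0 s)}"

definition reward_simplex :: "('x::finite \<Rightarrow> real) set" where
  "reward_simplex = {r. (\<forall>x. r x \<ge> 0) \<and> (\<Sum>x\<in>UNIV. r x) = 1}"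

definition dotp :: "('x::finite \<Rightarrow> real) \<Rightarrow> ('x \<Rightarrow> real) \<Rightarrow> real" where
  "dotp r d = (\<Sum>x\<in>UNIV. r x * d x)"

definition subopt :: "('s::finite \<Rightarrow> 'a::finite \<Rightarrow> 's \<Rightarrow> real) \<Rightarrow> real \<Rightarrow> ('s \<Rightarrow> real)
    \<Rightarrow> ('s \<times> 'a \<Rightarrow> real) \<Rightarrow> ('s \<times> 'a \<Rightarrow> real) \<Rightarrow> real" where
  "subopt Ptr \<gamma> \<mu>0 r d = (SUP d'\<in>Phi Ptr \<gamma> \<mu>0. dotp r d') - dotp r d"

definition RD :: "('s::finite \<Rightarrow> 'a::finite \<Rightarrow> 's \<Rightarrow> real) \<Rightarrow> real \<Rightarrow> ('s \<Rightarrow> real)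
    \<Rightarrow> nat \<Rightarrow> (nat \<Rightarrow> 's \<times> 'a \<Rightarrow> real) \<Rightarrow> (nat \<Rightarrow> real) \<Rightarrow> ('s \<times> 'a \<Rightarrow> real) set" where
  "RD Ptr \<gamma> \<mu>0 K de eps = {r \<in> reward_simplex. \<forall>k\<in>{1..K}. subopt Ptr \<gamma> \<mu>0 r (de k) \<le> eps k}"

definition rng :: "('s::finite \<Rightarrow> 'a::finite \<Rightarrow> 's \<Rightarrow> real) \<Rightarrow> real \<Rightarrow> ('s \<Rightarrow> real)
    \<Rightarrow> ('s \<times> 'a \<Rightarrow> real) set \<Rightarrow> real" where
  "rng Ptr \<gamma> \<mu>0 R = (INF r\<in>R. (SUP d\<in>Phi Ptr \<gamma> \<mu>0. dotp r d) - (INF d\<in>Phi Ptr \<gamma> \<mu>0. dotp r d))"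

definition RP :: "('s::finite \<Rightarrow> 'a::finite \<Rightarrow> 's \<Rightarrow> real) \<Rightarrow> real \<Rightarrow> ('s \<Rightarrow> real)
    \<Rightarrow> nat \<Rightarrow> (nat \<Rightarrow> 's \<times> 'a \<Rightarrow> real) \<Rightarrow> (nat \<Rightarrow> real) \<Rightarrow> (nat \<times> nat) set
    \<Rightarrow> (nat \<Rightarrow> nat \<Rightarrow> real) \<Rightarrow> ('s \<times> 'a \<Rightarrow> real) set" where
  "RP Ptr \<gamma> \<mu>0 K de eps Pset epsP =
     {r \<in> RD Ptr \<gamma> \<mu>0 K de eps. \<forall>(i,j)\<in>Pset. dotp r (\<lambda>x. de i x - de j x) \<ge> epsP i j}"

definition simple_path :: "nat \<Rightarrow> (nat \<times> nat) set \<Rightarrow> nat list \<Rightarrow> bool" where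
  "simple_path K Pset ps \<longleftrightarrow> ps \<noteq> [] \<and> distinct ps \<and> set ps \<subseteq> {1..K}
     \<and> (\<forall>e\<in>set (zip ps (tl ps)). e \<in> Pset)"

definition path_eps :: "(nat \<Rightarrow> nat \<Rightarrow> real) \<Rightarrow> nat list \<Rightarrow> real" where
  "path_eps epsP ps = sum_list (map (\<lambda>(i,j). epsP i j) (zip ps (tl ps)))"

end

theory Submission
  imports Defs
begin

text \<open>Fix r in R_P. Summing the margin constraints r.(d_e^i - d_e^j) \<ge> \<epsilon>_ij along the path
  p = (i_0, ..., i_m) telescopes to r.d_e^(i_0) - r.d_e^(i_m) \<ge> \<epsilon>(p). Both endpoints lie in \<Phi>,
  on which r.d is bounded (by 0 and 1, since occupancy measures have total mass 1), so this gap
  is at most max r.d - min r.d over \<Phi>.\<close>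

lemma path_eps_le_telescoping:
  fixes f :: "nat \<Rightarrow> real"
  assumes edge: "\<And>i j. (i, j) \<in> E \<Longrightarrow> e i j \<le> f i - f j"
    and "\<forall>p\<in>set (zip ps (tl ps)). p \<in> E" and "ps \<noteq> []"
  shows "path_eps e ps \<le> f (hd ps) - f (last ps)"
  using assms(2,3)
proof (induction ps rule: induct_list012)
  case (3 x y zs)
  have "path_eps e (x # y # zs) = e x y + path_eps e (y # zs)"
    by (simp add: path_eps_def)
  also have "\<dots> \<le> (f x - f y) + (f y - f (last (y # zs)))"
    using 3 edge by (intro add_mono) auto
  finally show ?case by simp
qed (simp_all add: path_eps_def)

lemma sum_flowM:
  assumes "stochastic_kernel Ptr"
  shows "(\<Sum>s\<in>UNIV. flowM Ptr \<gamma> d s) = (1 - \<gamma>) * (\<Sum>x\<in>UNIV. d x)"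
proof -
  have mass: "(\<Sum>s\<in>UNIV. \<Sum>a\<in>UNIV. d (s, a)) = (\<Sum>x\<in>UNIV. d x)"
    by (simp add: sum.cartesian_product UNIV_Times_UNIV[symmetric] del: UNIV_Times_UNIV)
  have "(\<Sum>s\<in>UNIV. \<Sum>s'\<in>UNIV. \<Sum>a'\<in>UNIV. Ptr s' a' s * d (s', a'))
      = (\<Sum>s'\<in>UNIV. \<Sum>a'\<in>UNIV. (\<Sum>s\<in>UNIV. Ptr s' a' s) * d (s', a'))"
    by (subst sum.swap, subst sum.swap) (simp add: sum_distrib_right)
  also have "\<dots> = (\<Sum>x\<in>UNIV. d x)"
    using assms mass by (simp add: stochastic_kernel_def)
  finally show ?thesis
    by (simp add: flowM_def sum_subtractf sum_distrib_left[symmetric] mass algebra_simps)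
qed

lemma Phi_total_mass:
  assumes "stochastic_kernel Ptr" and "is_distribution \<mu>0" and "\<gamma> < 1"
    and "d \<in> Phi Ptr \<gamma> \<mu>0"
  shows "(\<Sum>x\<in>UNIV. d x) = 1"
proof -
  have "(1 - \<gamma>) * (\<Sum>x\<in>UNIV. d x) = (\<Sum>s\<in>UNIV. (1 - \<gamma>) * \<mu>0 s)"
    using assms(1,4) by (simp add: sum_flowM[symmetric] Phi_def)
  also have "\<dots> = 1 - \<gamma>"
    using assms(2) by (simp add: is_distribution_def sum_distrib_left[symmetric])
  finally show ?thesis using assms(3) by simp
qed

lemma dotp_reward_nonneg:
  assumes "r \<in> reward_simplex" and "\<forall>x. d x \<ge> 0"
  shows "0 \<le> dotp r d"
  using assms by (auto simp: reward_simplex_def dotp_def intro!: sum_nonneg)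

lemma dotp_reward_le_mass:
  assumes "r \<in> reward_simplex" and "\<forall>x. d x \<ge> 0"
  shows "dotp r d \<le> (\<Sum>x\<in>UNIV. d x)"
proof -
  have "r x \<le> 1" for x
    using assms(1) member_le_sum[of x UNIV r] by (simp add: reward_simplex_def)
  then show ?thesis
    unfolding dotp_def using assms(2) by (intro sum_mono) (metis mult_1 mult_right_mono)
qed

lemma value_gap_le_value_range:
  assumes "stochastic_kernel Ptr" and "is_distribution \<mu>0" and "\<gamma> < 1"
    and "r \<in> reward_simplex" and "d \<in> Phi Ptr \<gamma> \<mu>0" and "d' \<in> Phi Ptr \<gamma> \<mu>0"
  shows "dotp r d - dotp r d'
    \<le> (SUP d\<in>Phi Ptr \<gamma> \<mu>0. dotp r d) - (INF d\<in>Phi Ptr \<gamma> \<mu>0. dotp r d)"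
proof -
  have bounds: "0 \<le> dotp r d'' \<and> dotp r d'' \<le> 1" if "d'' \<in> Phi Ptr \<gamma> \<mu>0" for d''
  proof -
    have nonneg: "\<forall>x. d'' x \<ge> 0"
      using that by (simp add: Phi_def)
    show ?thesis
      using dotp_reward_nonneg[OF assms(4) nonneg] dotp_reward_le_mass[OF assms(4) nonneg]
        Phi_total_mass[OF assms(1-3) that]
      by simp
  qed
  have "dotp r d \<le> (SUP d\<in>Phi Ptr \<gamma> \<mu>0. dotp r d)"
    using assms(5) bounds by (intro cSUP_upper bdd_aboveI2) auto
  moreover have "(INF d\<in>Phi Ptr \<gamma> \<mu>0. dotp r d) \<le> dotp r d'"
    using assms(6) bounds by (intro cINF_lower bdd_belowI2) auto
  ultimately show ?thesis by linarith
qed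

theorem mainTheorem11:
  fixes Ptr :: "'s::finite \<Rightarrow> 'a::finite \<Rightarrow> 's \<Rightarrow> real"
    and \<mu>0 :: "'s \<Rightarrow> real" and \<gamma> :: real
    and K :: nat and de :: "nat \<Rightarrow> 's \<times> 'a \<Rightarrow> real" and eps :: "nat \<Rightarrow> real"
    and Pset :: "(nat \<times> nat) set" and epsP :: "nat \<Rightarrow> nat \<Rightarrow> real"
    and ps :: "nat list"
  assumes "stochastic_kernel Ptr" and "is_distribution \<mu>0"
    and "0 < \<gamma>" and "\<gamma> < 1"
    and "\<forall>k\<in>{1..K}. de k \<in> Phi Ptr \<gamma> \<mu>0"
    and "\<forall>k\<in>{1..K}. eps k \<ge> 0"
    and "Pset \<subseteq> {1..K} \<times> {1..K}"
    and "\<forall>(i,j)\<in>Pset. epsP i j \<ge> 0"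
    and "simple_path K Pset ps"
    and "RP Ptr \<gamma> \<mu>0 K de eps Pset epsP \<noteq> {}"
  shows "rng Ptr \<gamma> \<mu>0 (RP Ptr \<gamma> \<mu>0 K de eps Pset epsP) \<ge> path_eps epsP ps"
  unfolding rng_def
proof (rule cINF_greatest[OF assms(10)])
  fix r assume r: "r \<in> RP Ptr \<gamma> \<mu>0 K de eps Pset epsP"
  have simplex: "r \<in> reward_simplex"
    using r by (simp add: RP_def RD_def)
  have margins: "epsP i j \<le> dotp r (de i) - dotp r (de j)" if "(i, j) \<in> Pset" for i j
    using r that by (auto simp: RP_def dotp_def right_diff_distrib sum_subtractf)
  obtain path: "ps \<noteq> []" "\<forall>p\<in>set (zip ps (tl ps)). p \<in> Pset" "set ps \<subseteq> {1..K}"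
    using assms(9) by (simp add: simple_path_def)
  have ends: "de (hd ps) \<in> Phi Ptr \<gamma> \<mu>0" "de (last ps) \<in> Phi Ptr \<gamma> \<mu>0"
    using path(1,3) assms(5) by (meson hd_in_set last_in_set subsetD)+
  have "path_eps epsP ps \<le> dotp r (de (hd ps)) - dotp r (de (last ps))"
    using path_eps_le_telescoping[OF margins path(2,1)] .
  also have "\<dots> \<le> (SUP d\<in>Phi Ptr \<gamma> \<mu>0. dotp r d) - (INF d\<in>Phi Ptr \<gamma> \<mu>0. dotp r d)"
    using value_gap_le_value_range[OF assms(1,2,4) simplex ends] .
  finally show "path_eps epsP ps
    \<le> (SUP d\<in>Phi Ptr \<gamma> \<mu>0. dotp r d) - (INF d\<in>Phi Ptr \<gamma> \<mu>0. dotp r d)" .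
qed

end
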